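(* Assume the Continuum Hypothesis. Then there is a subspace $X$ of $\mathbb{R}$ which is a Baire space and such that \textsc{Bob} has no winning strategy in $\mathsf{BM}_\mathrm{fin}(X)$.
   Context: A Baire space is a space in which countable intersections of dense open sets are dense. The game $\mathsf{BM}_\mathrm{fin}(X)$: \textsc{Alice} plays a non-empty open set $A_0$; \textsc{Bob} plays a finite collection $\mathcal{B}_0$ of non-empty open subsets of $A_0$; in inning $n+1$, for each $B \in \mathcal{B}_n$ \textsc{Alice} plays a non-empty open set $A_B \subseteq B$, letting $\mathcal{A}_{n+1}=\{A_B : B\in\mathcal{B}_n\}$, and \textsc{Bob} plays a finite collection $\mathcal{B}_{n+1}$ of non-empty open subsets of $\bigcup\mathcal{A}_{n+1}$; \textsc{Bob} wins if $\bigcap_{n}\bigcup\mathcal{B}_n\neq\emptyset$, otherwise \textsc{Alice} wins. *)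

theory Defs
  imports "HOL-Analysis.Analysis" "HOL-Library.Equipollence"
begin

definition continuum_hypothesis :: bool where
  "continuum_hypothesis \<longleftrightarrow>
     (\<forall>A :: real set. countable A \<or> A \<approx> (UNIV :: real set))"

definition baire_space :: "'a topology \<Rightarrow> bool" where
  "baire_space T \<longleftrightarrow>
     (\<forall>U :: nat \<Rightarrow> 'a set.
        (\<forall>n. openin T (U n) \<and> T closure_of (U n) = topspace T)
        \<longrightarrow> T closure_of (topspace T \<inter> (\<Inter>n. U n)) = topspace T)"

text \<open>Alice's move in inning n is a function a n :: real set => real set, giving for each
  B in the previous Bob collection (for inning 0 the virtual collection {X}) the set A_B;
  outside the previous collection it is required to be empty.\<close>

type_synonym alice_move = "real set \<Rightarrow> real set"
type_synonym bob_strategy = "alice_move list \<Rightarrow> real set set"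

definition bob_coll :: "bob_strategy \<Rightarrow> (nat \<Rightarrow> alice_move) \<Rightarrow> nat \<Rightarrow> real set set" where
  "bob_coll \<sigma> a n = \<sigma> (map a [0..<Suc n])"

definition prev_coll :: "real set \<Rightarrow> bob_strategy \<Rightarrow> (nat \<Rightarrow> alice_move) \<Rightarrow> nat \<Rightarrow> real set set" where
  "prev_coll X \<sigma> a n = (if n = 0 then {X} else bob_coll \<sigma> a (n - 1))"

definition alice_legal :: "real set \<Rightarrow> bob_strategy \<Rightarrow> (nat \<Rightarrow> alice_move) \<Rightarrow> nat \<Rightarrow> bool" where
  "alice_legal X \<sigma> a n \<longleftrightarrow>
     (\<forall>B. (B \<in> prev_coll X \<sigma> a n \<longrightarrow>
            a n B \<noteq> {} \<and> a n B \<subseteq> B \<and> openin (top_of_set X) (a n B)) \<and>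
          (B \<notin> prev_coll X \<sigma> a n \<longrightarrow> a n B = {}))"

definition bob_legal :: "real set \<Rightarrow> bob_strategy \<Rightarrow> (nat \<Rightarrow> alice_move) \<Rightarrow> nat \<Rightarrow> bool" where
  "bob_legal X \<sigma> a n \<longleftrightarrow>
     finite (bob_coll \<sigma> a n) \<and>
     (\<forall>B \<in> bob_coll \<sigma> a n. B \<noteq> {} \<and> openin (top_of_set X) B \<and>
          B \<subseteq> \<Union> (a n ` prev_coll X \<sigma> a n))"

definition bob_winning_strategy_BMfin :: "real set \<Rightarrow> bob_strategy \<Rightarrow> bool" where
  "bob_winning_strategy_BMfin X \<sigma> \<longleftrightarrow>
     (\<forall>a. (\<forall>n. (\<forall>m\<le>n. alice_legal X \<sigma> a m) \<longrightarrow> bob_legal X \<sigma> a n) \<and>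
          ((\<forall>n. alice_legal X \<sigma> a n) \<longrightarrow> (\<Inter>n. \<Union> (bob_coll \<sigma> a n)) \<noteq> {}))"

end

theory Submission
  imports Defs
begin

(* Under CH the reals carry a well-founded total order all of whose initial segments are
   countable.  A strategy of Bob enters only through a countable code: how Bob replies when Alice
   plays traces on X of rational intervals.  Against a code and an enumeration e of a countable set,
   Alice can answer every set of Bob's in inning n by a rational interval whose closure misses e n,
   so every outcome of this counterplay lies in a closed set K missing the range of e.
   Enumerating all G-delta sets and all codes along the order, choose points x_y by transfinite
   recursion: if e_y enumerates \<rat> and the earlier points, then K_y misses the earlier points and,
   missing \<rat>, is nowhere dense; so by the Baire category theorem x_y can be taken inside the y-th
   G-delta set whenever it is non-meager, off K_y and off every earlier K_z.  The resulting X meets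
   every non-meager G-delta set, hence is a Baire space, and misses every K_y, so no strategy of
   Bob is winning. *)

definition rat_ivl :: "rat \<times> rat \<Rightarrow> real set" where
  "rat_ivl J = {real_of_rat (fst J) <..< real_of_rat (snd J)}"

definition rat_civl :: "rat \<times> rat \<Rightarrow> real set" where
  "rat_civl J = {real_of_rat (fst J) .. real_of_rat (snd J)}"

lemma rat_ivl_subset_civl: "rat_ivl J \<subseteq> rat_civl J"
  unfolding rat_ivl_def rat_civl_def by auto

lemma open_rat_ivl [simp]: "open (rat_ivl J)"
  unfolding rat_ivl_def by auto

lemma closed_rat_civl [simp]: "closed (rat_civl J)"
  unfolding rat_civl_def by auto

lemma exists_rat_between:
  fixes a b :: real
  assumes "a < b"
  obtains q where "a < real_of_rat q" "real_of_rat q < b"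
  using Rats_dense_in_real[OF assms] by (metis Rats_cases)

lemma open_eq_Union_rat_ivl:
  assumes "open S"
  shows "S = \<Union>{rat_ivl J | J. rat_ivl J \<subseteq> S}"
proof (intro equalityI subsetI)
  fix x assume "x \<in> S"
  then obtain d where "d > 0" and ball: "{x - d <..< x + d} \<subseteq> S"
    using assms openE by (metis ball_eq_greaterThanLessThan)
  obtain a where a: "x - d < real_of_rat a" "real_of_rat a < x"
    using exists_rat_between[of "x - d" x] \<open>d > 0\<close> by auto
  obtain b where b: "x < real_of_rat b" "real_of_rat b < x + d"
    using exists_rat_between[of x "x + d"] \<open>d > 0\<close> by auto
  have "rat_ivl (a, b) \<subseteq> {x - d <..< x + d}"
    using a b unfolding rat_ivl_def by auto
  moreover have "x \<in> rat_ivl (a, b)"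
    using a b unfolding rat_ivl_def by simp
  ultimately show "x \<in> \<Union>{rat_ivl J | J. rat_ivl J \<subseteq> S}"
    using ball by blast
qed auto

lemma rat_civl_in_open:
  assumes "open U" "x \<in> U"
  obtains J where "rat_ivl J \<noteq> {}" "rat_civl J \<subseteq> U"
proof -
  obtain d where "d > 0" and ball: "{x - d <..< x + d} \<subseteq> U"
    using assms openE by (metis ball_eq_greaterThanLessThan)
  obtain a where a: "x < real_of_rat a" "real_of_rat a < x + d"
    using exists_rat_between[of x "x + d"] \<open>d > 0\<close> by auto
  obtain b where b: "real_of_rat a < real_of_rat b" "real_of_rat b < x + d"
    using exists_rat_between a(2) by blast
  have "rat_civl (a, b) \<subseteq> {x - d <..< x + d}"
    using \<open>d > 0\<close> a b unfolding rat_civl_def by auto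
  moreover have "rat_ivl (a, b) \<noteq> {}"
    using b(1) unfolding rat_ivl_def by simp
  ultimately show thesis
    using that ball by blast
qed

lemma rat_civl_in_open_avoiding:
  assumes "open U" "U \<noteq> {}"
  obtains J where "rat_ivl J \<noteq> {}" "rat_civl J \<subseteq> U" "e \<notin> rat_civl J"
proof -
  have "U \<noteq> {e}"
    using assms(1) not_open_singleton[of e] by blast
  then obtain x where "x \<in> U - {e}"
    using assms(2) by blast
  moreover have "open (U - {e})"
    using assms(1) by (simp add: open_Diff)
  ultimately obtain J where "rat_ivl J \<noteq> {}" "rat_civl J \<subseteq> U - {e}"
    using rat_civl_in_open by metis
  then show thesis
    using that by blast
qed

lemma interior_disjoint_Rats:
  fixes K :: "real set"
  assumes "K \<inter> \<rat> = {}"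
  shows "interior K = {}"
proof -
  have "interior K \<subseteq> interior (- \<rat>)"
    using assms by (intro interior_mono) blast
  then show ?thesis
    by (simp add: interior_complement Rats_closure_real)
qed

section \<open>Meager sets\<close>

definition meager :: "'a::topological_space set \<Rightarrow> bool" where
  "meager S \<longleftrightarrow> (\<exists>\<F>. countable \<F> \<and> (\<forall>F\<in>\<F>. closed F \<and> interior F = {}) \<and> S \<subseteq> \<Union>\<F>)"

lemma meagerI:
  assumes "countable \<F>" "\<forall>F\<in>\<F>. closed F \<and> interior F = {}" "S \<subseteq> \<Union>\<F>"
  shows "meager S"
  unfolding meager_def using assms by blast

lemma interior_meager:
  fixes S :: "'a::complete_space set"
  assumes "meager S"
  shows "interior S = {}"
proof -
  obtain \<F> where "countable \<F>" "\<forall>F\<in>\<F>. closed F \<and> interior F = {}" "S \<subseteq> \<Union>\<F>"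
    using assms unfolding meager_def by blast
  then have "euclidean interior_of \<Union>\<F> = {}"
    by (intro Baire_category_alt[OF disjI1[OF completely_metrizable_space_euclidean]])
      (simp_all flip: closed_closedin)
  then show ?thesis
    using interior_mono[OF \<open>S \<subseteq> \<Union>\<F>\<close>] by simp
qed

lemma not_meager_open_Int_dense_Gdelta:
  fixes V :: "'a::complete_space set" and W :: "nat \<Rightarrow> 'a set"
  assumes "open V" "V \<noteq> {}" and "\<And>n. open (W n)" "\<And>n. closure (W n) = UNIV"
  shows "\<not> meager (V \<inter> (\<Inter>n. W n))"
proof
  assume "meager (V \<inter> (\<Inter>n. W n))"
  then obtain \<F> where \<F>: "countable \<F>" "\<forall>F\<in>\<F>. closed F \<and> interior F = {}"
    and cover: "V \<inter> (\<Inter>n. W n) \<subseteq> \<Union>\<F>"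
    unfolding meager_def by blast
  let ?\<G> = "\<F> \<union> range (\<lambda>n. - W n)"
  have "countable ?\<G>"
    using \<F>(1) by auto
  moreover have "\<forall>F \<in> ?\<G>. closed F \<and> interior F = {}"
    using \<F>(2) assms(3,4) by (auto simp: interior_complement)
  moreover have "V \<subseteq> \<Union>?\<G>"
    using cover by blast
  ultimately have "meager V"
    by (rule meagerI)
  then show False
    using interior_meager assms(1,2) interior_open by blast
qed

lemma avoid_countable_nowhere_dense:
  fixes \<F> :: "'a::complete_space set set"
  assumes "countable \<F>" "\<forall>F\<in>\<F>. closed F \<and> interior F = {}"
  shows "\<exists>x. x \<notin> \<Union>\<F> \<and> (\<not> meager G \<longrightarrow> x \<in> G)"
proof (cases "meager G")
  case True
  have "\<not> meager (UNIV :: 'a set)"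
    using interior_meager by force
  then have "\<not> UNIV \<subseteq> \<Union>\<F>"
    using assms meagerI by metis
  then show ?thesis
    using True by blast
next
  case False
  then have "\<not> G \<subseteq> \<Union>\<F>"
    using assms meagerI by metis
  then show ?thesis
    by blast
qed

definition meets_nonmeager_Gdelta :: "'a::topological_space set \<Rightarrow> bool" where
  "meets_nonmeager_Gdelta X \<longleftrightarrow>
     (\<forall>U :: nat \<Rightarrow> 'a set. (\<forall>n. open (U n)) \<and> \<not> meager (\<Inter>n. U n) \<longrightarrow> X \<inter> (\<Inter>n. U n) \<noteq> {})"

lemma meets_open_Int_dense_Gdelta:
  fixes X :: "'a::complete_space set" and W :: "nat \<Rightarrow> 'a set"
  assumes "meets_nonmeager_Gdelta X"
    and "open V" "V \<noteq> {}" "\<And>n. open (W n)" "\<And>n. closure (W n) = UNIV"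
  shows "X \<inter> V \<inter> (\<Inter>n. W n) \<noteq> {}"
proof -
  have Gdelta: "(\<Inter>n. case_nat V W n) = V \<inter> (\<Inter>n. W n)"
    by (auto split: nat.splits)
  have "\<forall>n. open (case_nat V W n)"
    using assms(2,4) by (simp split: nat.split)
  moreover have "\<not> meager (\<Inter>n. case_nat V W n)"
    unfolding Gdelta using assms(2-5) by (rule not_meager_open_Int_dense_Gdelta)
  ultimately show ?thesis
    using assms(1) Gdelta unfolding meets_nonmeager_Gdelta_def by (metis Int_assoc)
qed

lemma meets_open_if_meets_nonmeager_Gdelta:
  fixes X :: "'a::complete_space set"
  assumes "meets_nonmeager_Gdelta X" "open V" "V \<noteq> {}"
  shows "X \<inter> V \<noteq> {}"
  using meets_open_Int_dense_Gdelta[OF assms, of "\<lambda>_. UNIV"] by simp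

lemma closure_eq_UNIV_if_dense_trace:
  fixes X W :: "'a::topological_space set"
  assumes "\<And>V. open V \<Longrightarrow> V \<noteq> {} \<Longrightarrow> X \<inter> V \<noteq> {}"
    and "top_of_set X closure_of (X \<inter> W) = X"
  shows "closure W = UNIV"
proof (rule ccontr)
  assume "closure W \<noteq> UNIV"
  then obtain x where "x \<in> X" "x \<notin> closure W"
    using assms(1)[of "- closure W"] by blast
  moreover have "X \<inter> closure (X \<inter> W) = X"
    using assms(2) by (simp add: closure_of_subtopology Int_assoc)
  ultimately show False
    using closure_mono[of "X \<inter> W" W] by blast
qed

lemma baire_space_if_meets_nonmeager_Gdelta:
  fixes X :: "'a::complete_space set"
  assumes "meets_nonmeager_Gdelta X"
  shows "baire_space (top_of_set X)"
  unfolding baire_space_def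
proof (intro allI impI)
  fix U :: "nat \<Rightarrow> 'a set"
  assume U: "\<forall>n. openin (top_of_set X) (U n) \<and> top_of_set X closure_of U n = topspace (top_of_set X)"
  then obtain W where W: "\<And>n. open (W n)" "\<And>n. U n = X \<inter> W n"
    unfolding openin_open by metis
  have "top_of_set X closure_of (X \<inter> W n) = X" for n
    using U unfolding W(2)[symmetric] by simp
  then have dense: "closure (W n) = UNIV" for n
    using meets_open_if_meets_nonmeager_Gdelta[OF assms] closure_eq_UNIV_if_dense_trace by blast
  have "X \<subseteq> closure (X \<inter> (\<Inter>n. U n))"
  proof
    fix x assume "x \<in> X"
    show "x \<in> closure (X \<inter> (\<Inter>n. U n))"
    proof (rule ccontr)
      assume "x \<notin> closure (X \<inter> (\<Inter>n. U n))"
      then have "open (- closure (X \<inter> (\<Inter>n. U n)))" "- closure (X \<inter> (\<Inter>n. U n)) \<noteq> {}"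
        by auto
      then have "X \<inter> - closure (X \<inter> (\<Inter>n. U n)) \<inter> (\<Inter>n. W n) \<noteq> {}"
        by (rule meets_open_Int_dense_Gdelta[OF assms _ _ W(1) dense])
      then obtain y where y: "y \<in> X" "y \<notin> closure (X \<inter> (\<Inter>n. U n))" "\<And>n. y \<in> W n"
        by blast
      then have "y \<in> X \<inter> (\<Inter>n. U n)"
        using W(2) by blast
      then have "y \<in> closure (X \<inter> (\<Inter>n. U n))"
        by (rule closure_subset[THEN subsetD])
      with y(2) show False
        by blast
    qed
  qed
  then show "top_of_set X closure_of (topspace (top_of_set X) \<inter> (\<Inter>n. U n)) = topspace (top_of_set X)"
    by (auto simp: closure_of_subtopology)
qed

definition Gdelta_of_code :: "(nat \<times> (rat \<times> rat)) set \<Rightarrow> real set" where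
  "Gdelta_of_code c = (\<Inter>n. \<Union>{rat_ivl J | J. (n, J) \<in> c})"

lemma Gdelta_of_code_eq:
  assumes "\<And>n. open (U n)"
  shows "Gdelta_of_code {(n, J). rat_ivl J \<subseteq> U n} = (\<Inter>n. U n)"
  unfolding Gdelta_of_code_def using open_eq_Union_rat_ivl[OF assms] by simp

lemma meets_nonmeager_Gdelta_if_meets_coded:
  fixes g :: "'a \<Rightarrow> (nat \<times> (rat \<times> rat)) set"
  assumes "surj g" and "\<And>y. \<not> meager (Gdelta_of_code (g y)) \<Longrightarrow> X \<inter> Gdelta_of_code (g y) \<noteq> {}"
  shows "meets_nonmeager_Gdelta X"
  unfolding meets_nonmeager_Gdelta_def
proof (intro allI impI)
  fix U :: "nat \<Rightarrow> real set"
  assume "(\<forall>n. open (U n)) \<and> \<not> meager (\<Inter>n. U n)"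
  then show "X \<inter> (\<Inter>n. U n) \<noteq> {}"
    using assms(2)[of "inv g {(n, J). rat_ivl J \<subseteq> U n}"]
    by (simp add: surj_f_inv_f[OF assms(1)] Gdelta_of_code_eq)
qed

section \<open>A Luzin-type construction under CH\<close>

lemma countable_segments_inv_image:
  assumes "inj \<phi>" and "\<And>y. countable {z. (z, \<phi> y) \<in> S}"
  shows "countable {z. (z, y) \<in> inv_image S \<phi>}"
proof -
  have "\<phi> ` {z. (z, y) \<in> inv_image S \<phi>} \<subseteq> {z. (z, \<phi> y) \<in> S}"
    by auto
  then show ?thesis
    using assms countable_subset countable_image_inj_on by (metis inj_on_subset subset_UNIV)
qed

lemma CH_wf_order_countable_segments:
  assumes "continuum_hypothesis"
  obtains R :: "real rel"
  where "wf R" "\<And>y z. y \<noteq> z \<Longrightarrow> (y, z) \<in> R \<or> (z, y) \<in> R" "\<And>y. countable {z. (z, y) \<in> R}"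
proof -
  (* Either a well-order of the reals already has countable initial segments, or by CH the
     segment below the least point with an uncountable segment is equipollent to the reals,
     and the order can be pulled back along a bijection. *)
  obtain r :: "real rel" where r: "Well_order r" "Field r = UNIV"
    using well_ordering by metis
  define S where "S = r - Id"
  have wf: "wf S"
    using r(1) unfolding S_def by (simp add: well_order_on_def)
  have total: "(y, z) \<in> S \<or> (z, y) \<in> S" if "y \<noteq> z" for y z
    using r that unfolding S_def well_order_on_def linear_order_on_def total_on_def by blast
  show thesis
  proof (cases "\<forall>y. countable {z. (z, y) \<in> S}")
    case True
    then show thesis
      using that wf total by blast
  next
    case False
    then obtain y1 where "y1 \<in> {y. uncountable {z. (z, y) \<in> S}}"
      by blast
    from wfE_min[OF wf this] obtain y0 where y0: "uncountable {z. (z, y0) \<in> S}"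
      and least: "\<And>y. (y, y0) \<in> S \<Longrightarrow> countable {z. (z, y) \<in> S}"
      unfolding mem_Collect_eq by metis
    define A where "A = {z. (z, y0) \<in> S}"
    have "A \<approx> (UNIV :: real set)"
      using assms y0 unfolding continuum_hypothesis_def A_def by blast
    then obtain \<phi> where \<phi>: "bij_betw \<phi> (UNIV :: real set) A"
      using eqpoll_sym unfolding eqpoll_def by blast
    define R where "R = inv_image S \<phi>"
    have "wf R"
      unfolding R_def using wf by simp
    moreover have "(y, z) \<in> R \<or> (z, y) \<in> R" if "y \<noteq> z" for y z
      using total \<phi> that unfolding R_def bij_betw_def inj_on_def by auto
    moreover have "countable {z. (z, y) \<in> R}" for y
      unfolding R_def using \<phi> least unfolding A_def bij_betw_def
      by (intro countable_segments_inv_image) auto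
    ultimately show thesis
      using that by blast
  qed
qed

lemma surj_real_Pow_countable: "\<exists>g :: real \<Rightarrow> 'a::countable set. surj g"
proof -
  obtain f :: "real \<Rightarrow> nat set" where "surj f"
    using nat_sets_eqpoll_reals unfolding eqpoll_def
    by (metis bij_betw_imp_surj_on bij_betw_inv)
  have "T \<in> range (\<lambda>y. from_nat ` f y)" for T :: "'a set"
  proof -
    obtain y where "f y = to_nat ` T"
      using \<open>surj f\<close> by (metis surjD)
    then have "from_nat ` f y = T"
      by (simp add: image_image)
    then show ?thesis
      by blast
  qed
  then show ?thesis
    by blast
qed

definition enum_with_Rats :: "real set \<Rightarrow> nat \<Rightarrow> real" where
  "enum_with_Rats A = from_nat_into (A \<union> \<rat>)"

lemma range_enum_with_Rats: "countable A \<Longrightarrow> range (enum_with_Rats A) = A \<union> \<rat>"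
  unfolding enum_with_Rats_def using countable_rat by (intro range_from_nat_into) auto

lemma interior_disjoint_range_enum_with_Rats:
  assumes "countable A" "K \<inter> range (enum_with_Rats A) = {}"
  shows "interior K = {}"
  using assms interior_disjoint_Rats unfolding range_enum_with_Rats[OF assms(1)] by blast

lemma wf_rec_choice:
  assumes "wf R"
    and step: "\<And>g y. (\<And>z. (z, y) \<in> R \<Longrightarrow> P (g ` {w. (w, z) \<in> R}) z (g z)) \<Longrightarrow>
                 \<exists>v. P (g ` {z. (z, y) \<in> R}) y v"
  shows "\<exists>f. \<forall>y. P (f ` {z. (z, y) \<in> R}) y (f y)"
proof -
  define f where "f = wfrec R (\<lambda>g y. SOME v. P (g ` {z. (z, y) \<in> R}) y v)"
  have f_eq: "f y = (SOME v. P (f ` {z. (z, y) \<in> R}) y v)" for y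
  proof -
    have "cut f R y ` {z. (z, y) \<in> R} = f ` {z. (z, y) \<in> R}"
      by (simp add: cut_apply)
    then show ?thesis
      unfolding f_def by (subst wfrec[OF \<open>wf R\<close>]) simp
  qed
  have "P (f ` {z. (z, y) \<in> R}) y (f y)" for y
    using \<open>wf R\<close>
  proof (induction y rule: wf_induct_rule)
    case (less y)
    then have "\<exists>v. P (f ` {z. (z, y) \<in> R}) y v"
      by (rule step)
    then show ?case
      unfolding f_eq[of y] by (rule someI_ex)
  qed
  then show ?thesis
    by blast
qed

lemma wf_Luzin_sequence:
  fixes R :: "real rel" and G :: "real \<Rightarrow> real set" and K :: "real \<Rightarrow> (nat \<Rightarrow> real) \<Rightarrow> real set"
  assumes "wf R" and segments: "\<And>y. countable {z. (z, y) \<in> R}"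
    and closed_K: "\<And>y e. closed (K y e)" and K_avoids: "\<And>y e. K y e \<inter> range e = {}"
  obtains x :: "real \<Rightarrow> real" and e :: "real \<Rightarrow> nat \<Rightarrow> real"
  where "\<And>y. range (e y) = x ` {z. (z, y) \<in> R} \<union> \<rat>"
    and "\<And>y z. z = y \<or> (z, y) \<in> R \<Longrightarrow> x y \<notin> K z (e z)"
    and "\<And>y. \<not> meager (G y) \<Longrightarrow> x y \<in> G y"
proof -
  define enum where "enum \<V> = enum_with_Rats (fst ` \<V>)" for \<V> :: "(real \<times> real set) set"
  define P where
    "P \<V> y v \<longleftrightarrow> snd v = K y (enum \<V>) \<and> fst v \<notin> \<Union>(insert (snd v) (snd ` \<V>)) \<and>
                 (\<not> meager (G y) \<longrightarrow> fst v \<in> G y)" for \<V> y v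
  have nowhere_dense: "closed (K y (enum \<V>)) \<and> interior (K y (enum \<V>)) = {}" if "countable \<V>" for \<V> y
    unfolding enum_def
    using closed_K interior_disjoint_range_enum_with_Rats[OF countable_image[OF that] K_avoids] by simp
  have "\<exists>v. P (g ` {z. (z, y) \<in> R}) y v"
    if IH: "\<And>z. (z, y) \<in> R \<Longrightarrow> P (g ` {w. (w, z) \<in> R}) z (g z)" for g y
  proof -
    let ?\<V> = "g ` {z. (z, y) \<in> R}"
    let ?\<F> = "insert (K y (enum ?\<V>)) (snd ` ?\<V>)"
    have "countable ?\<F>"
      using segments by simp
    moreover have "\<forall>F\<in>?\<F>. closed F \<and> interior F = {}"
      using nowhere_dense IH segments unfolding P_def by auto
    ultimately obtain x where "x \<notin> \<Union>?\<F>" "\<not> meager (G y) \<longrightarrow> x \<in> G y"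
      using avoid_countable_nowhere_dense[where G = "G y"] by meson
    then show ?thesis
      unfolding P_def by (intro exI[of _ "(x, K y (enum ?\<V>))"]) simp
  qed
  then obtain f where f: "\<And>y. P (f ` {z. (z, y) \<in> R}) y (f y)"
    using wf_rec_choice[where P = P, OF \<open>wf R\<close>] by blast
  show thesis
  proof (rule that[where x = "\<lambda>y. fst (f y)" and e = "\<lambda>y. enum (f ` {z. (z, y) \<in> R})"])
    show "range (enum (f ` {z. (z, y) \<in> R})) = (\<lambda>y. fst (f y)) ` {z. (z, y) \<in> R} \<union> \<rat>" for y
      unfolding enum_def using segments by (simp add: range_enum_with_Rats image_image)
    show "fst (f y) \<notin> K z (enum (f ` {w. (w, z) \<in> R}))" if "z = y \<or> (z, y) \<in> R" for y z
      using that f[of y] f[of z] unfolding P_def by auto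
    show "\<not> meager (G y) \<Longrightarrow> fst (f y) \<in> G y" for y
      using f[of y] unfolding P_def by blast
  qed
qed

lemma CH_Luzin_type_set:
  fixes G :: "real \<Rightarrow> real set" and K :: "real \<Rightarrow> (nat \<Rightarrow> real) \<Rightarrow> real set"
  assumes "continuum_hypothesis"
    and "\<And>y e. closed (K y e)" and K_avoids: "\<And>y e. K y e \<inter> range e = {}"
  obtains X where "\<And>y. \<not> meager (G y) \<Longrightarrow> X \<inter> G y \<noteq> {}" and "\<And>y. \<exists>e. X \<inter> K y e = {}"
proof -
  obtain R :: "real rel" where "wf R" and total: "\<And>y z. y \<noteq> z \<Longrightarrow> (y, z) \<in> R \<or> (z, y) \<in> R"
    and segments: "\<And>y. countable {z. (z, y) \<in> R}"
    using CH_wf_order_countable_segments[OF assms(1)] by blast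
  show thesis
  proof (rule wf_Luzin_sequence[where G = G and K = K, OF \<open>wf R\<close> segments assms(2,3)])
    fix x e
    assume range_e: "\<And>y. range (e y) = x ` {z. (z, y) \<in> R} \<union> \<rat>"
      and off_K: "\<And>y z. z = y \<or> (z, y) \<in> R \<Longrightarrow> x y \<notin> K z (e z)"
      and in_G: "\<And>y. \<not> meager (G y) \<Longrightarrow> x y \<in> G y"
    have x_off_K: "x y \<notin> K z (e z)" for y z
    proof (cases "(y, z) \<in> R")
      case True
      then have "x y \<in> range (e z)"
        unfolding range_e by blast
      then show ?thesis
        using K_avoids by blast
    next
      case False
      then show ?thesis
        using off_K total by blast
    qed
    show thesis
    proof (rule that[of "range x"])
      show "range x \<inter> G y \<noteq> {}" if "\<not> meager (G y)" for y
        using in_G[OF that] by blast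
      show "\<exists>e. range x \<inter> K y e = {}" for y
        using x_off_K by blast
    qed
  qed
qed

section \<open>Alice's rational counterplay\<close>

definition rat_answer :: "real set \<Rightarrow> real set set \<Rightarrow> (rat \<times> rat) list \<Rightarrow> bool" where
  "rat_answer X \<C> js \<longleftrightarrow> (\<forall>B\<in>\<C>. \<exists>J\<in>set js. X \<inter> rat_ivl J \<noteq> {} \<and> X \<inter> rat_ivl J \<subseteq> B)"

definition rat_move :: "real set \<Rightarrow> real set set \<Rightarrow> (rat \<times> rat) list \<Rightarrow> alice_move" where
  "rat_move X \<C> js B =
     (if B \<in> \<C> then \<Union>{X \<inter> rat_ivl J | J. J \<in> set js \<and> X \<inter> rat_ivl J \<subseteq> B} else {})"

lemma rat_move_subset: "rat_move X \<C> js B \<subseteq> X \<inter> (\<Union>J\<in>set js. rat_ivl J)"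
  unfolding rat_move_def by auto

lemma alice_legal_rat_move:
  assumes "a n = rat_move X (prev_coll X \<sigma> a n) js" and "rat_answer X (prev_coll X \<sigma> a n) js"
  shows "alice_legal X \<sigma> a n"
  unfolding alice_legal_def
proof (intro allI conjI impI)
  fix B
  assume B: "B \<in> prev_coll X \<sigma> a n"
  then obtain J where J: "J \<in> set js" "X \<inter> rat_ivl J \<noteq> {}" "X \<inter> rat_ivl J \<subseteq> B"
    using assms(2) unfolding rat_answer_def by blast
  then have "X \<inter> rat_ivl J \<in> {X \<inter> rat_ivl J | J. J \<in> set js \<and> X \<inter> rat_ivl J \<subseteq> B}"
    by blast
  then have "X \<inter> rat_ivl J \<subseteq> a n B"
    unfolding assms(1) rat_move_def using B by auto
  then show "a n B \<noteq> {}"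
    using J(2) by blast
  show "a n B \<subseteq> B"
    unfolding assms(1) rat_move_def by auto
  show "openin (top_of_set X) (a n B)"
    unfolding assms(1) rat_move_def using B by (auto intro!: openin_Union openin_open_Int)
next
  show "B \<notin> prev_coll X \<sigma> a n \<Longrightarrow> a n B = {}" for B
    unfolding assms(1) rat_move_def by simp
qed

lemma rat_answer_avoiding_exists:
  fixes X :: "real set"
  assumes dense: "\<And>V. open V \<Longrightarrow> V \<noteq> {} \<Longrightarrow> X \<inter> V \<noteq> {}"
    and "finite \<C>" and \<C>: "\<forall>B\<in>\<C>. B \<noteq> {} \<and> openin (top_of_set X) B"
  shows "\<exists>js. rat_answer X \<C> js \<and> (\<forall>J\<in>set js. x \<notin> rat_civl J)"
proof -
  have "\<exists>J. X \<inter> rat_ivl J \<noteq> {} \<and> X \<inter> rat_ivl J \<subseteq> B \<and> x \<notin> rat_civl J" if "B \<in> \<C>" for B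
  proof -
    have "openin (top_of_set X) B" "B \<noteq> {}"
      using \<C> that by auto
    then obtain U where U: "open U" "B = X \<inter> U"
      unfolding openin_open by blast
    then have "U \<noteq> {}"
      using \<open>B \<noteq> {}\<close> by blast
    then obtain J where J: "rat_ivl J \<noteq> {}" "rat_civl J \<subseteq> U" "x \<notin> rat_civl J"
      using rat_civl_in_open_avoiding[OF \<open>open U\<close>] by metis
    then have "X \<inter> rat_ivl J \<noteq> {}"
      using dense open_rat_ivl by blast
    moreover have "X \<inter> rat_ivl J \<subseteq> B"
      using J(2) U(2) rat_ivl_subset_civl by blast
    ultimately show ?thesis
      using J(3) by blast
  qed
  then obtain pick where pick: "\<And>B. B \<in> \<C> \<Longrightarrow>
      X \<inter> rat_ivl (pick B) \<noteq> {} \<and> X \<inter> rat_ivl (pick B) \<subseteq> B \<and> x \<notin> rat_civl (pick B)"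
    by metis
  obtain js where js: "set js = pick ` \<C>"
    using finite_list finite_imageI assms(2) by metis
  have "rat_answer X \<C> js"
    unfolding rat_answer_def js using pick by blast
  moreover have "\<forall>J\<in>set js. x \<notin> rat_civl J"
    unfolding js using pick by blast
  ultimately show ?thesis
    by blast
qed

(* A position lists Alice's rational answers, the most recent first. *)
primrec rat_play :: "real set \<Rightarrow> bob_strategy \<Rightarrow> (rat \<times> rat) list list \<Rightarrow> alice_move list" where
  "rat_play X \<sigma> [] = []"
| "rat_play X \<sigma> (js # p) =
     rat_play X \<sigma> p @ [rat_move X (if p = [] then {X} else \<sigma> (rat_play X \<sigma> p)) js]"

definition bob_coll_at :: "real set \<Rightarrow> bob_strategy \<Rightarrow> (rat \<times> rat) list list \<Rightarrow> real set set" where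
  "bob_coll_at X \<sigma> p = (if p = [] then {X} else \<sigma> (rat_play X \<sigma> p))"

lemma rat_play_Cons: "rat_play X \<sigma> (js # p) = rat_play X \<sigma> p @ [rat_move X (bob_coll_at X \<sigma> p) js]"
  unfolding bob_coll_at_def by simp

type_synonym strategy_code = "((rat \<times> rat) list list \<times> (rat \<times> rat) list) set"

(* Codes form the powerset of a countable type, so the codes of all strategies on all candidate
   sets X are enumerated by the reals before X is constructed. *)
definition code_of_strategy :: "real set \<Rightarrow> bob_strategy \<Rightarrow> strategy_code" where
  "code_of_strategy X \<sigma> = {(p, js). rat_answer X (bob_coll_at X \<sigma> p) js}"

definition counter_answer :: "strategy_code \<Rightarrow> real \<Rightarrow> (rat \<times> rat) list list \<Rightarrow> (rat \<times> rat) list" where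
  "counter_answer t x p = (SOME js. (p, js) \<in> t \<and> (\<forall>J\<in>set js. x \<notin> rat_civl J))"

primrec counter_pos :: "strategy_code \<Rightarrow> (nat \<Rightarrow> real) \<Rightarrow> nat \<Rightarrow> (rat \<times> rat) list list" where
  "counter_pos t e 0 = []"
| "counter_pos t e (Suc n) = counter_answer t (e n) (counter_pos t e n) # counter_pos t e n"

(* The filter on e n only matters if no admissible answer exists and SOME returns junk. *)
definition counter_set :: "strategy_code \<Rightarrow> (nat \<Rightarrow> real) \<Rightarrow> real set" where
  "counter_set t e = (\<Inter>n. \<Union>J \<in> {J \<in> set (counter_answer t (e n) (counter_pos t e n)). e n \<notin> rat_civl J}.
                         rat_civl J)"

lemma closed_counter_set: "closed (counter_set t e)"
  unfolding counter_set_def by (intro closed_INT closed_UN) auto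

lemma counter_set_disjoint_range: "counter_set t e \<inter> range e = {}"
  unfolding counter_set_def by blast

definition counter_play :: "real set \<Rightarrow> bob_strategy \<Rightarrow> strategy_code \<Rightarrow> (nat \<Rightarrow> real) \<Rightarrow> nat \<Rightarrow> alice_move" where
  "counter_play X \<sigma> t e n =
     rat_move X (bob_coll_at X \<sigma> (counter_pos t e n)) (counter_answer t (e n) (counter_pos t e n))"

lemma rat_play_counter_pos: "rat_play X \<sigma> (counter_pos t e n) = map (counter_play X \<sigma> t e) [0..<n]"
  by (induction n) (simp_all del: rat_play.simps(2) add: rat_play_Cons counter_play_def)

lemma prev_coll_counter_play:
  "prev_coll X \<sigma> (counter_play X \<sigma> t e) n = bob_coll_at X \<sigma> (counter_pos t e n)"
proof (cases n)
  case 0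
  then show ?thesis
    by (simp add: bob_coll_at_def prev_coll_def)
next
  case (Suc m)
  then have "counter_pos t e n \<noteq> []"
    by simp
  then show ?thesis
    unfolding bob_coll_at_def rat_play_counter_pos prev_coll_def bob_coll_def Suc by simp
qed

lemma counter_play_legal:
  fixes X :: "real set"
  assumes dense: "\<And>V. open V \<Longrightarrow> V \<noteq> {} \<Longrightarrow> X \<inter> V \<noteq> {}"
    and win: "bob_winning_strategy_BMfin X \<sigma>"
  defines "t \<equiv> code_of_strategy X \<sigma>"
  shows "alice_legal X \<sigma> (counter_play X \<sigma> t e) n \<and>
         (\<forall>J\<in>set (counter_answer t (e n) (counter_pos t e n)). e n \<notin> rat_civl J)"
proof (induction n rule: less_induct)
  case (less n)
  let ?a = "counter_play X \<sigma> t e" and ?js = "counter_answer t (e n) (counter_pos t e n)"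
  have prev: "finite (prev_coll X \<sigma> ?a n) \<and> (\<forall>B\<in>prev_coll X \<sigma> ?a n. B \<noteq> {} \<and> openin (top_of_set X) B)"
  proof (cases n)
    case 0
    then show ?thesis
      using dense[of UNIV] by (simp add: prev_coll_def)
  next
    case (Suc m)
    then have "bob_legal X \<sigma> ?a m"
      using less win unfolding bob_winning_strategy_BMfin_def by simp
    then show ?thesis
      unfolding bob_legal_def prev_coll_def Suc by simp
  qed
  have code: "(p, js) \<in> t \<longleftrightarrow> rat_answer X (bob_coll_at X \<sigma> p) js" for p js
    unfolding t_def code_of_strategy_def by simp
  obtain js where "rat_answer X (prev_coll X \<sigma> ?a n) js" "\<forall>J\<in>set js. e n \<notin> rat_civl J"
    using rat_answer_avoiding_exists[OF dense conjunct1[OF prev] conjunct2[OF prev]] by blast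
  then have "(counter_pos t e n, js) \<in> t \<and> (\<forall>J\<in>set js. e n \<notin> rat_civl J)"
    unfolding code prev_coll_counter_play by simp
  then have "(counter_pos t e n, ?js) \<in> t \<and> (\<forall>J\<in>set ?js. e n \<notin> rat_civl J)"
    unfolding counter_answer_def by (rule someI)
  then have "rat_answer X (prev_coll X \<sigma> ?a n) ?js \<and> (\<forall>J\<in>set ?js. e n \<notin> rat_civl J)"
    unfolding code prev_coll_counter_play by simp
  then show ?case
    using alice_legal_rat_move counter_play_def prev_coll_counter_play by metis
qed

lemma winning_strategy_meets_counter_set:
  fixes X :: "real set"
  assumes dense: "\<And>V. open V \<Longrightarrow> V \<noteq> {} \<Longrightarrow> X \<inter> V \<noteq> {}"
    and win: "bob_winning_strategy_BMfin X \<sigma>"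
  shows "X \<inter> counter_set (code_of_strategy X \<sigma>) e \<noteq> {}"
proof -
  define t where "t = code_of_strategy X \<sigma>"
  define a where "a = counter_play X \<sigma> t e"
  have legal: "alice_legal X \<sigma> a n" "\<forall>J\<in>set (counter_answer t (e n) (counter_pos t e n)). e n \<notin> rat_civl J" for n
    using counter_play_legal[OF dense win] unfolding a_def t_def by blast+
  then have bob_legal: "\<And>n. bob_legal X \<sigma> a n" and "(\<Inter>n. \<Union>(bob_coll \<sigma> a n)) \<noteq> {}"
    using win unfolding bob_winning_strategy_BMfin_def by blast+
  then obtain x where x: "\<And>n. x \<in> \<Union>(bob_coll \<sigma> a n)"
    by blast
  have "x \<in> X \<and> x \<in> (\<Union>J \<in> {J \<in> set (counter_answer t (e n) (counter_pos t e n)). e n \<notin> rat_civl J}. rat_civl J)"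
    for n
  proof -
    have "x \<in> \<Union>(a n ` prev_coll X \<sigma> a n)"
      using x[of n] bob_legal[of n] unfolding bob_legal_def by blast
    then have "x \<in> X \<and> (\<exists>J\<in>set (counter_answer t (e n) (counter_pos t e n)). x \<in> rat_ivl J)"
      unfolding a_def counter_play_def using rat_move_subset by blast
    then show ?thesis
      using legal(2)[of n] rat_ivl_subset_civl by blast
  qed
  then show ?thesis
    unfolding counter_set_def t_def by blast
qed

theorem proposition4p10:
  assumes "continuum_hypothesis"
  shows "\<exists>X :: real set. baire_space (top_of_set X) \<and>
           \<not> (\<exists>\<sigma>. bob_winning_strategy_BMfin X \<sigma>)"
proof -
  obtain g :: "real \<Rightarrow> (nat \<times> (rat \<times> rat)) set" where g: "surj g"
    using surj_real_Pow_countable by blast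
  obtain h :: "real \<Rightarrow> strategy_code" where h: "surj h"
    using surj_real_Pow_countable by blast
  obtain X where meets: "\<And>y. \<not> meager (Gdelta_of_code (g y)) \<Longrightarrow> X \<inter> Gdelta_of_code (g y) \<noteq> {}"
    and avoids: "\<And>y. \<exists>e. X \<inter> counter_set (h y) e = {}"
    using CH_Luzin_type_set[where G = "\<lambda>y. Gdelta_of_code (g y)" and K = "\<lambda>y. counter_set (h y)",
        OF assms closed_counter_set counter_set_disjoint_range]
    by blast
  have "meets_nonmeager_Gdelta X"
    using g meets by (rule meets_nonmeager_Gdelta_if_meets_coded)
  moreover have "\<not> bob_winning_strategy_BMfin X \<sigma>" for \<sigma>
  proof
    assume "bob_winning_strategy_BMfin X \<sigma>"
    moreover obtain y where "h y = code_of_strategy X \<sigma>"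
      using h by (metis surjD)
    ultimately show False
      using winning_strategy_meets_counter_set avoids
        meets_open_if_meets_nonmeager_Gdelta[OF \<open>meets_nonmeager_Gdelta X\<close>]
      by metis
  qed
  ultimately show ?thesis
    using baire_space_if_meets_nonmeager_Gdelta by blast
qed

end
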